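(* Let $L$ be a $\kappa$-frame and $C\in\mathbb{C}L$. The quotient $L/C$ is d-reduced if and only if $C$ is clear.
   Context: $\kappa$ is a fixed regular cardinal; a $\kappa$-frame is a bounded distributive lattice having joins of all subsets of cardinality $<\kappa$ and satisfying the frame distributive law for such joins. A $\kappa$-ideal is a downset in which every subset of cardinality $<\kappa$ has an upper bound. A congruence is an equivalence relation that is a sub-$\kappa$-frame of $L\times L$; $\mathbb{C}L$ is the frame of congruences. For a $\kappa$-ideal $I$, $\partial_I=\{(a,b)\mid\forall x\in L:\ a\wedge x\in I\iff b\wedge x\in I\}$; a congruence is clear if it equals $\partial_I$ for some $\kappa$-ideal $I$. For a $\kappa$-frame $M$, $\mathfrak{D}_M=\{(a,b)\mid\forall x\in M:\ a\wedge x=0\iff b\wedge x=0\}$, and $M$ is d-reduced if $\mathfrak{D}_M$ is the trivial (diagonal) congruence, i.e. $a\ne b$ implies there is $x$ with exactly one of $a\wedge x$, $b\wedge x$ equal to $0$. *)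

theory Defs
  imports Main
begin

record 'a ostr =
  carrier :: "'a set"
  le :: "'a \<Rightarrow> 'a \<Rightarrow> bool"

definition small :: "'k rel \<Rightarrow> 'a set \<Rightarrow> bool" where
  "small \<kappa> S \<longleftrightarrow> (card_of S, \<kappa>) \<in> ordLess"

definition is_lub :: "'a ostr \<Rightarrow> 'a set \<Rightarrow> 'a \<Rightarrow> bool" where
  "is_lub M S x \<longleftrightarrow> x \<in> carrier M \<and> (\<forall>s\<in>S. le M s x) \<and>
     (\<forall>y\<in>carrier M. (\<forall>s\<in>S. le M s y) \<longrightarrow> le M x y)"

definition is_glb :: "'a ostr \<Rightarrow> 'a set \<Rightarrow> 'a \<Rightarrow> bool" where
  "is_glb M S x \<longleftrightarrow> x \<in> carrier M \<and> (\<forall>s\<in>S. le M x s) \<and>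
     (\<forall>y\<in>carrier M. (\<forall>s\<in>S. le M y s) \<longrightarrow> le M y x)"

definition Join :: "'a ostr \<Rightarrow> 'a set \<Rightarrow> 'a" where
  "Join M S = (THE x. is_lub M S x)"

definition Meet :: "'a ostr \<Rightarrow> 'a \<Rightarrow> 'a \<Rightarrow> 'a" where
  "Meet M a b = (THE x. is_glb M {a, b} x)"

definition Bot :: "'a ostr \<Rightarrow> 'a" where
  "Bot M = Join M {}"

definition kframe :: "'k rel \<Rightarrow> 'a ostr \<Rightarrow> bool" where
  "kframe \<kappa> M \<longleftrightarrow>
     (\<forall>a\<in>carrier M. le M a a) \<and>
     (\<forall>a\<in>carrier M. \<forall>b\<in>carrier M. le M a b \<and> le M b a \<longrightarrow> a = b) \<and>
     (\<forall>a\<in>carrier M. \<forall>b\<in>carrier M. \<forall>c\<in>carrier M. le M a b \<and> le M b c \<longrightarrow> le M a c) \<and>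
     (\<exists>t. is_glb M {} t) \<and>
     (\<forall>a\<in>carrier M. \<forall>b\<in>carrier M. \<exists>x. is_glb M {a, b} x) \<and>
     (\<forall>a\<in>carrier M. \<forall>b\<in>carrier M. \<exists>x. is_lub M {a, b} x) \<and>
     (\<forall>a\<in>carrier M. \<forall>b\<in>carrier M. \<forall>c\<in>carrier M.
        Meet M a (Join M {b, c}) = Join M {Meet M a b, Meet M a c}) \<and>
     (\<forall>S. S \<subseteq> carrier M \<and> small \<kappa> S \<longrightarrow> (\<exists>x. is_lub M S x)) \<and>
     (\<forall>a\<in>carrier M. \<forall>S. S \<subseteq> carrier M \<and> small \<kappa> S \<longrightarrow>
        Meet M a (Join M S) = Join M ((\<lambda>s. Meet M a s) ` S))"

text \<open>Congruence: an equivalence relation on L that is a sub-kappa-frame of L x L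
  (componentwise order; closed under binary meets and joins of size < kappa;
  top and bottom pairs are in it by reflexivity).\<close>
definition kcongruence :: "'k rel \<Rightarrow> 'a ostr \<Rightarrow> 'a rel \<Rightarrow> bool" where
  "kcongruence \<kappa> L C \<longleftrightarrow> equiv (carrier L) C \<and>
     (\<forall>a b c d. (a, b) \<in> C \<and> (c, d) \<in> C \<longrightarrow> (Meet L a c, Meet L b d) \<in> C) \<and>
     (\<forall>S. S \<subseteq> C \<and> small \<kappa> S \<longrightarrow> (Join L (fst ` S), Join L (snd ` S)) \<in> C)"

definition kideal :: "'k rel \<Rightarrow> 'a ostr \<Rightarrow> 'a set \<Rightarrow> bool" where
  "kideal \<kappa> L I \<longleftrightarrow> I \<subseteq> carrier L \<and>
     (\<forall>a\<in>I. \<forall>b\<in>carrier L. le L b a \<longrightarrow> b \<in> I) \<and>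
     (\<forall>S. S \<subseteq> I \<and> small \<kappa> S \<longrightarrow> (\<exists>u\<in>I. \<forall>s\<in>S. le L s u))"

definition partialI :: "'a ostr \<Rightarrow> 'a set \<Rightarrow> 'a rel" where
  "partialI L I = {(a, b). a \<in> carrier L \<and> b \<in> carrier L \<and>
      (\<forall>x\<in>carrier L. Meet L a x \<in> I \<longleftrightarrow> Meet L b x \<in> I)}"

definition clear :: "'k rel \<Rightarrow> 'a ostr \<Rightarrow> 'a rel \<Rightarrow> bool" where
  "clear \<kappa> L C \<longleftrightarrow> (\<exists>I. kideal \<kappa> L I \<and> C = partialI L I)"

definition kquotient :: "'a ostr \<Rightarrow> 'a rel \<Rightarrow> 'a set ostr" where
  "kquotient L C = \<lparr> carrier = carrier L // C,
     le = (\<lambda>X Y. \<exists>a\<in>X. \<exists>b\<in>Y. (Meet L a b, a) \<in> C) \<rparr>"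

definition frakD :: "'a ostr \<Rightarrow> 'a rel" where
  "frakD M = {(a, b). a \<in> carrier M \<and> b \<in> carrier M \<and>
      (\<forall>x\<in>carrier M. Meet M a x = Bot M \<longleftrightarrow> Meet M b x = Bot M)}"

definition d_reduced :: "'a ostr \<Rightarrow> bool" where
  "d_reduced M \<longleftrightarrow> frakD M = Id_on (carrier M)"

end

theory Submission
  imports Defs
begin

text \<open>Everything is decided by the class \<open>Z\<close> of \<open>0\<close> under \<open>C\<close>. In \<open>L/C\<close> we have
  \<open>[a] \<and> [x] = 0\<close> iff \<open>a \<and> x \<in> Z\<close>, so the congruence \<open>D\<close> of \<open>L/C\<close> pulls back to \<open>\<partial>\<^sub>Z\<close>, which
  always contains \<open>C\<close>; hence \<open>L/C\<close> is d-reduced iff \<open>C = \<partial>\<^sub>Z\<close>. On the other hand \<open>Z\<close> is a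
  \<open>\<kappa>\<close>-ideal, and for every \<open>\<kappa>\<close>-ideal \<open>I\<close> the class of \<open>0\<close> under \<open>\<partial>\<^sub>I\<close> is \<open>I\<close>
  itself, so \<open>C\<close> is clear iff \<open>C = \<partial>\<^sub>Z\<close> as well.\<close>

lemma small_empty: "Cinfinite \<kappa> \<Longrightarrow> small \<kappa> {}"
  unfolding small_def using Cinfinite_gt_empty by auto

lemma small_image: "small \<kappa> S \<Longrightarrow> small \<kappa> (f ` S)"
  unfolding small_def using card_of_image ordLeq_ordLess_trans by blast

lemma Meet_commute: "Meet M a b = Meet M b a"
  unfolding Meet_def by (simp add: insert_commute)

lemma Meet_eq_glb:
  assumes "\<And>a b. a \<in> carrier M \<Longrightarrow> b \<in> carrier M \<Longrightarrow> le M a b \<Longrightarrow> le M b a \<Longrightarrow> a = b"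
    and "is_glb M {a, b} x"
  shows "Meet M a b = x"
  unfolding Meet_def using assms by (intro the_equality) (auto simp: is_glb_def)

lemma Join_eq_lub:
  assumes "\<And>a b. a \<in> carrier M \<Longrightarrow> b \<in> carrier M \<Longrightarrow> le M a b \<Longrightarrow> le M b a \<Longrightarrow> a = b"
    and "is_lub M S x"
  shows "Join M S = x"
  unfolding Join_def using assms by (intro the_equality) (auto simp: is_lub_def)

locale kappa_frame =
  fixes \<kappa> :: "'k rel" and L :: "'a ostr"
  assumes Cinfinite: "Cinfinite \<kappa>" and kframe: "kframe \<kappa> L"
begin

lemma refl: "a \<in> carrier L \<Longrightarrow> le L a a"
  using kframe unfolding kframe_def by (elim conjE) blast

lemma antisym: "a \<in> carrier L \<Longrightarrow> b \<in> carrier L \<Longrightarrow> le L a b \<Longrightarrow> le L b a \<Longrightarrow> a = b"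
  using kframe unfolding kframe_def by (elim conjE) blast

lemma trans:
  "a \<in> carrier L \<Longrightarrow> b \<in> carrier L \<Longrightarrow> c \<in> carrier L \<Longrightarrow> le L a b \<Longrightarrow> le L b c \<Longrightarrow> le L a c"
  using kframe unfolding kframe_def by (elim conjE) blast

lemma Join_lub:
  assumes "S \<subseteq> carrier L" "small \<kappa> S"
  shows "is_lub L S (Join L S)"
proof -
  obtain x where "is_lub L S x" using kframe assms unfolding kframe_def by (elim conjE) blast
  then show ?thesis using Join_eq_lub antisym by metis
qed

lemma Meet_glb:
  assumes "a \<in> carrier L" "b \<in> carrier L"
  shows "is_glb L {a, b} (Meet L a b)"
proof -
  obtain x where "is_glb L {a, b} x" using kframe assms unfolding kframe_def by (elim conjE) blast
  then show ?thesis using Meet_eq_glb antisym by metis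
qed

lemma Meet_closed: "a \<in> carrier L \<Longrightarrow> b \<in> carrier L \<Longrightarrow> Meet L a b \<in> carrier L"
  and Meet_lower1: "a \<in> carrier L \<Longrightarrow> b \<in> carrier L \<Longrightarrow> le L (Meet L a b) a"
  and Meet_lower2: "a \<in> carrier L \<Longrightarrow> b \<in> carrier L \<Longrightarrow> le L (Meet L a b) b"
  and Meet_greatest: "a \<in> carrier L \<Longrightarrow> b \<in> carrier L \<Longrightarrow> y \<in> carrier L \<Longrightarrow>
    le L y a \<Longrightarrow> le L y b \<Longrightarrow> le L y (Meet L a b)"
  using Meet_glb unfolding is_glb_def by auto

lemma Meet_eqI:
  assumes "a \<in> carrier L" "b \<in> carrier L" "z \<in> carrier L" "le L z a" "le L z b"
    and "\<And>y. y \<in> carrier L \<Longrightarrow> le L y a \<Longrightarrow> le L y b \<Longrightarrow> le L y z"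
  shows "Meet L a b = z"
  using assms antisym by (intro Meet_eq_glb) (auto simp: is_glb_def)

lemma Meet_absorb: "a \<in> carrier L \<Longrightarrow> b \<in> carrier L \<Longrightarrow> le L a b \<Longrightarrow> Meet L a b = a"
  by (rule Meet_eqI) (auto intro: refl)

lemma Meet_idem: "a \<in> carrier L \<Longrightarrow> Meet L a a = a"
  by (simp add: Meet_absorb refl)

lemma Meet_assoc:
  assumes a: "a \<in> carrier L" and b: "b \<in> carrier L" and c: "c \<in> carrier L"
  shows "Meet L (Meet L a b) c = Meet L a (Meet L b c)"
proof -
  let ?m = "Meet L (Meet L a b) c"
  have ab: "Meet L a b \<in> carrier L" and bc: "Meet L b c \<in> carrier L" and m: "?m \<in> carrier L"
    using a b c by (auto intro: Meet_closed)
  have "le L ?m (Meet L a b)" "le L ?m c" using ab c by (auto intro: Meet_lower1 Meet_lower2)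
  then have ma: "le L ?m a" and mb: "le L ?m b"
    using trans[OF m ab] a b by (auto intro: Meet_lower1 Meet_lower2)
  show ?thesis
  proof (rule sym, rule Meet_eqI[OF a bc m ma])
    show "le L ?m (Meet L b c)"
      using Meet_greatest[OF b c m mb] \<open>le L ?m c\<close> .
    fix y assume y: "y \<in> carrier L" "le L y a" "le L y (Meet L b c)"
    then have "le L y b" "le L y c"
      using trans[OF y(1) bc] b c by (auto intro: Meet_lower1 Meet_lower2)
    then show "le L y ?m" using y a b c ab by (auto intro: Meet_greatest)
  qed
qed

lemma Bot_lub: "is_lub L {} (Bot L)"
  unfolding Bot_def using Join_lub small_empty[OF Cinfinite] by blast

lemma Bot_closed: "Bot L \<in> carrier L"
  and Bot_least: "y \<in> carrier L \<Longrightarrow> le L (Bot L) y"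
  using Bot_lub unfolding is_lub_def by auto

lemma Meet_Bot_left: "y \<in> carrier L \<Longrightarrow> Meet L (Bot L) y = Bot L"
  by (simp add: Meet_absorb Bot_closed Bot_least)

lemma Join_singleton: "a \<in> carrier L \<Longrightarrow> Join L {a} = a"
  using antisym by (intro Join_eq_lub) (auto simp: is_lub_def refl)

lemma kideal_Bot:
  assumes "kideal \<kappa> L I"
  shows "Bot L \<in> I"
proof -
  obtain u where "u \<in> I" using assms small_empty[OF Cinfinite] unfolding kideal_def by blast
  then show ?thesis using assms Bot_closed Bot_least unfolding kideal_def by blast
qed

lemma partialI_Bot_class:
  assumes I: "kideal \<kappa> L I"
  shows "partialI L I `` {Bot L} = I"
proof -
  have sub: "I \<subseteq> carrier L"
    and down: "\<And>a b. a \<in> I \<Longrightarrow> b \<in> carrier L \<Longrightarrow> le L b a \<Longrightarrow> b \<in> I"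
    using I unfolding kideal_def by blast+
  have "x \<in> I \<longleftrightarrow> (\<forall>y\<in>carrier L. Meet L x y \<in> I)" if x: "x \<in> carrier L" for x
  proof
    show "x \<in> I \<Longrightarrow> \<forall>y\<in>carrier L. Meet L x y \<in> I"
      using down x Meet_closed Meet_lower1 by blast
    show "\<forall>y\<in>carrier L. Meet L x y \<in> I \<Longrightarrow> x \<in> I"
      using x Meet_idem by force
  qed
  moreover have "Meet L (Bot L) y \<in> I" if "y \<in> carrier L" for y
    using that Meet_Bot_left kideal_Bot[OF I] by simp
  ultimately show ?thesis
    using sub Bot_closed unfolding partialI_def by auto
qed

end

locale kframe_congruence = kappa_frame +
  fixes C :: "'a rel"
  assumes kcongruence: "kcongruence \<kappa> L C"
begin

abbreviation Q :: "'a set ostr" where "Q \<equiv> kquotient L C"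

lemma cong_equiv: "equiv (carrier L) C"
  using kcongruence unfolding kcongruence_def by (elim conjE) blast

lemma cong_Meet: "(a, b) \<in> C \<Longrightarrow> (c, d) \<in> C \<Longrightarrow> (Meet L a c, Meet L b d) \<in> C"
  using kcongruence unfolding kcongruence_def by (elim conjE) blast

lemma cong_Join: "S \<subseteq> C \<Longrightarrow> small \<kappa> S \<Longrightarrow> (Join L (fst ` S), Join L (snd ` S)) \<in> C"
  using kcongruence unfolding kcongruence_def by (elim conjE) blast

lemma cong_closed: "(a, b) \<in> C \<Longrightarrow> a \<in> carrier L \<and> b \<in> carrier L"
  and cong_refl: "a \<in> carrier L \<Longrightarrow> (a, a) \<in> C"
  and cong_sym: "(a, b) \<in> C \<Longrightarrow> (b, a) \<in> C"
  and cong_trans: "(a, b) \<in> C \<Longrightarrow> (b, c) \<in> C \<Longrightarrow> (a, c) \<in> C"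
  using cong_equiv unfolding equiv_def refl_on_def sym_def trans_def by blast+

lemma class_eq_iff: "a \<in> carrier L \<Longrightarrow> b \<in> carrier L \<Longrightarrow> C``{a} = C``{b} \<longleftrightarrow> (a, b) \<in> C"
  using cong_equiv equiv_class_eq_iff by fastforce

lemma quotient_carrier: "carrier Q = (\<lambda>a. C``{a}) ` carrier L"
  unfolding kquotient_def quotient_def by auto

lemma quotient_le_iff:
  assumes "a \<in> carrier L" "b \<in> carrier L"
  shows "le Q (C``{a}) (C``{b}) \<longleftrightarrow> (Meet L a b, a) \<in> C"
proof
  assume "le Q (C``{a}) (C``{b})"
  then obtain a' b' where "(a, a') \<in> C" "(b, b') \<in> C" "(Meet L a' b', a') \<in> C"
    unfolding kquotient_def by auto
  then show "(Meet L a b, a) \<in> C" using cong_Meet cong_trans cong_sym by metis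
next
  assume "(Meet L a b, a) \<in> C"
  then show "le Q (C``{a}) (C``{b})" unfolding kquotient_def using assms cong_refl by auto
qed

lemma quotient_antisym:
  assumes "X \<in> carrier Q" "Y \<in> carrier Q" "le Q X Y" "le Q Y X"
  shows "X = Y"
proof -
  obtain a b where ab: "a \<in> carrier L" "b \<in> carrier L" "X = C``{a}" "Y = C``{b}"
    using assms quotient_carrier by auto
  have "(Meet L a b, a) \<in> C" "(Meet L a b, b) \<in> C"
    using assms(3,4) ab quotient_le_iff Meet_commute by metis+
  then show ?thesis using ab class_eq_iff cong_sym cong_trans by metis
qed

lemma quotient_Meet:
  assumes a: "a \<in> carrier L" and b: "b \<in> carrier L"
  shows "Meet Q (C``{a}) (C``{b}) = C``{Meet L a b}"
proof (rule Meet_eq_glb, use quotient_antisym in blast, unfold is_glb_def, intro conjI ballI impI)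
  have ab: "Meet L a b \<in> carrier L" using a b by (rule Meet_closed)
  show "C``{Meet L a b} \<in> carrier Q" using quotient_carrier ab by auto
  have "le Q (C``{Meet L a b}) (C``{a})" "le Q (C``{Meet L a b}) (C``{b})"
    using a b ab quotient_le_iff cong_refl Meet_absorb Meet_lower1 Meet_lower2 by simp_all
  then show "le Q (C``{Meet L a b}) s" if "s \<in> {C``{a}, C``{b}}" for s
    using that by blast
  fix Y assume Y: "Y \<in> carrier Q" "\<forall>s\<in>{C``{a}, C``{b}}. le Q Y s"
  then obtain y where y: "y \<in> carrier L" "Y = C``{y}" using quotient_carrier by auto
  have "(Meet L y a, y) \<in> C" "(Meet L y b, y) \<in> C"
    using Y(2) y quotient_le_iff a b by auto
  then have "(Meet L (Meet L y a) b, y) \<in> C"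
    using cong_Meet cong_refl[OF b] cong_trans by blast
  then show "le Q Y (C``{Meet L a b})"
    using quotient_le_iff[OF y(1) ab] Meet_assoc[OF y(1) a b] y by simp
qed

lemma quotient_Bot: "Bot Q = C``{Bot L}"
  unfolding Bot_def[of Q]
proof (rule Join_eq_lub, use quotient_antisym in blast, unfold is_lub_def, intro conjI ballI impI)
  show "C``{Bot L} \<in> carrier Q" using quotient_carrier Bot_closed by auto
  fix Y assume "Y \<in> carrier Q"
  then obtain y where "y \<in> carrier L" "Y = C``{y}" using quotient_carrier by auto
  then show "le Q (C``{Bot L}) Y"
    using quotient_le_iff Bot_closed Meet_Bot_left cong_refl by simp
qed simp

lemma quotient_Meet_eq_Bot_iff:
  assumes "a \<in> carrier L" "x \<in> carrier L"
  shows "Meet Q (C``{a}) (C``{x}) = Bot Q \<longleftrightarrow> Meet L a x \<in> C``{Bot L}"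
  using assms quotient_Meet quotient_Bot class_eq_iff Meet_closed Bot_closed cong_sym
  by auto

lemma frakD_quotient_iff:
  assumes "a \<in> carrier L" "b \<in> carrier L"
  shows "(C``{a}, C``{b}) \<in> frakD Q \<longleftrightarrow> (a, b) \<in> partialI L (C``{Bot L})"
  using assms quotient_Meet_eq_Bot_iff
  unfolding frakD_def partialI_def quotient_carrier by auto

lemma congruence_subset_partialI: "C \<subseteq> partialI L (C``{Bot L})"
proof (clarify)
  fix a b assume ab: "(a, b) \<in> C"
  have "(Meet L a x, Meet L b x) \<in> C" if "x \<in> carrier L" for x
    using cong_Meet[OF ab cong_refl[OF that]] .
  then show "(a, b) \<in> partialI L (C``{Bot L})"
    using cong_closed[OF ab] cong_sym cong_trans unfolding partialI_def by blast
qed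

lemma d_reduced_quotient_iff: "d_reduced Q \<longleftrightarrow> C = partialI L (C``{Bot L})"
proof -
  have "frakD Q = Id_on (carrier Q) \<longleftrightarrow> partialI L (C``{Bot L}) \<subseteq> C"
  proof
    assume D: "frakD Q = Id_on (carrier Q)"
    show "partialI L (C``{Bot L}) \<subseteq> C"
    proof (clarify)
      fix a b assume "(a, b) \<in> partialI L (C``{Bot L})"
      moreover then have "a \<in> carrier L" "b \<in> carrier L" unfolding partialI_def by auto
      ultimately have "(C``{a}, C``{b}) \<in> Id_on (carrier Q)" using D frakD_quotient_iff by simp
      then show "(a, b) \<in> C" using class_eq_iff \<open>a \<in> carrier L\<close> \<open>b \<in> carrier L\<close> by auto
    qed
  next
    assume P: "partialI L (C``{Bot L}) \<subseteq> C"
    have "frakD Q \<subseteq> Id_on (carrier Q)"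
    proof (clarify)
      fix X Y assume XY: "(X, Y) \<in> frakD Q"
      then obtain a b where ab: "a \<in> carrier L" "b \<in> carrier L" "X = C``{a}" "Y = C``{b}"
        unfolding frakD_def quotient_carrier by auto
      then have "(a, b) \<in> C" using XY P frakD_quotient_iff by auto
      then have "X = Y" using ab class_eq_iff by simp
      then show "(X, Y) \<in> Id_on (carrier Q)"
        using XY unfolding frakD_def by auto
    qed
    then show "frakD Q = Id_on (carrier Q)" unfolding frakD_def by auto
  qed
  then show ?thesis
    unfolding d_reduced_def using congruence_subset_partialI by blast
qed

lemma kideal_Bot_class: "kideal \<kappa> L (C``{Bot L})"
  unfolding kideal_def
proof (intro conjI ballI allI impI)
  show "C``{Bot L} \<subseteq> carrier L" using cong_closed by blast
next
  fix a b assume a: "a \<in> C``{Bot L}" and b: "b \<in> carrier L" and "le L b a"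
  then have "Meet L b a = b" using cong_closed Meet_absorb by blast
  moreover have "Meet L b (Bot L) = Bot L" using Meet_Bot_left[OF b] Meet_commute by metis
  moreover have "(Meet L b (Bot L), Meet L b a) \<in> C" using a cong_Meet cong_refl[OF b] by simp
  ultimately show "b \<in> C``{Bot L}" by simp
next
  fix S assume S: "S \<subseteq> C``{Bot L} \<and> small \<kappa> S"
  then have S_carrier: "S \<subseteq> carrier L" using cong_closed by blast
  define T where "T = (\<lambda>s. (Bot L, s)) ` S"
  have "T \<subseteq> C" "small \<kappa> T" using S small_image unfolding T_def by auto
  then have "(Join L (fst ` T), Join L (snd ` T)) \<in> C" by (rule cong_Join)
  moreover have "snd ` T = S" unfolding T_def by force
  moreover have "Join L (fst ` T) = Bot L"
  proof (cases "S = {}")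
    case False
    then have "fst ` T = {Bot L}" unfolding T_def by force
    then show ?thesis using Join_singleton Bot_closed by simp
  qed (simp add: T_def Bot_def)
  ultimately have "Join L S \<in> C``{Bot L}" by simp
  then show "\<exists>u\<in>C``{Bot L}. \<forall>s\<in>S. le L s u"
    using Join_lub[OF S_carrier] S unfolding is_lub_def by blast
qed

lemma clear_iff: "clear \<kappa> L C \<longleftrightarrow> C = partialI L (C``{Bot L})"
  unfolding clear_def using kideal_Bot_class partialI_Bot_class by metis

end

theorem mainTheorem11:
  fixes \<kappa> :: "'k rel" and L :: "'a ostr" and C :: "'a rel"
  assumes "Cinfinite \<kappa>" and "regularCard \<kappa>"
    and "kframe \<kappa> L"
    and "kcongruence \<kappa> L C"
  shows "d_reduced (kquotient L C) \<longleftrightarrow> clear \<kappa> L C"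
proof -
  interpret kframe_congruence \<kappa> L C
    using assms by unfold_locales
  show ?thesis using d_reduced_quotient_iff clear_iff by simp
qed

end
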